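(* Let $d,N\ge1$, $\sigma_0>0$, and let $W^*\in\mathbb{R}^{d\times d}$ be symmetric positive semidefinite. Consider matrices $W_1,\dots,W_N\in\mathbb{R}^{d\times d}$ with product $W=W_NW_{N-1}\cdots W_1$, initialized as $W_n(0)=\sqrt[N]{\sigma_0}\,I$ for all $n$, and trained by gradient flow on the depth-normalized loss $$\ell_N(W_1,\dots,W_N)=\frac{1}{2N}\mathbb{E}_A\big[\langle W_N\cdots W_1-W^*,A\rangle^2\big]=\frac{1}{2N}\|W_N\cdots W_1-W^*\|_F^2,$$ with $A$ having i.i.d. standard Gaussian entries. Then, letting $U$ be an orthogonal matrix diagonalizing $W^*$, $W(t)$ stays diagonalized by $U$ and its singular values satisfy $$\dot\sigma_i(t)=\sigma_i(t)^{2-\frac2N}(\sigma_i^*-\sigma_i(t)),$$ where $\sigma_i$ and $\sigma_i^*$ are the $i$th singular values of $W$ and $W^*$ respectively, corresponding to the same singular vector.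
   Context: $\langle X,Y\rangle=\mathrm{tr}(X^TY)$. Gradient flow means $\dot W_n=-\nabla_{W_n}\ell_N$ for each $n$ in continuous time. *)

theory Defs
  imports "HOL-Analysis.Analysis"
begin

text \<open>Ordered product of the first k factors: prodmat k Ws = Ws (k-1) ** ... ** Ws 0.
  The paper's W_1,...,W_N correspond to Ws 0, ..., Ws (N-1).\<close>
fun prodmat :: "nat \<Rightarrow> (nat \<Rightarrow> real^'d^'d) \<Rightarrow> real^'d^'d" where
  "prodmat 0 Ws = mat 1"
| "prodmat (Suc k) Ws = Ws k ** prodmat k Ws"

text \<open>Depth-normalized loss (1/(2N)) ||W_N...W_1 - W*||_F^2; the norm on real^'d^'d is Frobenius.\<close>
definition lossN :: "nat \<Rightarrow> real^'d^'d \<Rightarrow> (nat \<Rightarrow> real^'d^'d) \<Rightarrow> real" where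
  "lossN N Wst Ws = (1 / (2 * real N)) * (norm (prodmat N Ws - Wst))\<^sup>2"

definition grad_flow :: "nat \<Rightarrow> real^'d^'d \<Rightarrow> (nat \<Rightarrow> real \<Rightarrow> real^'d^'d) \<Rightarrow> bool" where
  "grad_flow N Wst Ws \<longleftrightarrow>
     (\<forall>t\<ge>0. \<forall>n<N. \<exists>G.
        (GDERIV (\<lambda>X. lossN N Wst ((\<lambda>k. Ws k t)(n := X))) (Ws n t) :> G) \<and>
        (Ws n has_vector_derivative (- G)) (at t within {0..}))"

end

theory Submission
  imports Defs
begin

text \<open>Conjugating every factor by U turns the flow into the same gradient flow for the diagonal
  target U^T W* U, started at the balanced point (c I, ..., c I). At a balanced diagonal point
  (D, ..., D) the gradient with respect to each factor is one and the same diagonal matrix, so it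
  is orthogonal to the deviations V_n - A of the factors from the mean A of their diagonal parts.
  Together with a local Lipschitz bound for the gradient this gives E' <= C E for the deviation
  energy E = sum_n |V_n - A|^2; as E(0) = 0, E vanishes identically and the flow stays balanced
  and diagonal. A diagonal entry d of the common factor then solves d' = -d^(N-1) (d^N - s)/N,
  which keeps d positive, and the chain rule for sigma = d^N gives the stated equation.\<close>

section \<open>Frobenius norm and matrix products\<close>

lemma matrix_add_rdistrib: "(A + B) ** C = A ** C + B ** C"
  for A B :: "'a::semiring_1^'n^'m"
  by (vector matrix_matrix_mult_def sum.distrib[symmetric] field_simps)

lemma matrix_diff_ldistrib: "A ** (B - C) = A ** B - A ** C"
  for A :: "'a::ring_1^'n^'m"
  by (simp add: matrix_matrix_mult_def vec_eq_iff sum_subtractf algebra_simps)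

lemma matrix_diff_rdistrib: "(A - B) ** C = A ** C - B ** C"
  for A B :: "'a::ring_1^'n^'m"
  by (simp add: matrix_matrix_mult_def vec_eq_iff sum_subtractf algebra_simps)

lemma transpose_diff: "transpose (A - B) = transpose A - transpose B"
  for A B :: "'a::ab_group_add^'n^'m"
  by (simp add: transpose_def vec_eq_iff)

lemma norm_matrix_sq: "(norm A)\<^sup>2 = (\<Sum>i\<in>UNIV. \<Sum>j\<in>UNIV. (A$i$j)\<^sup>2)"
  for A :: "real^'n^'m"
  by (simp add: norm_vec_def L2_set_def sum_nonneg)

lemma norm_matrix_mult_le: "norm (A ** B) \<le> norm A * norm B"
  for A :: "real^'n^'m" and B :: "real^'p^'n"
proof -
  have entry: "((A ** B)$i$j)\<^sup>2 \<le> (\<Sum>k\<in>UNIV. (A$i$k)\<^sup>2) * (\<Sum>k\<in>UNIV. (B$k$j)\<^sup>2)" for i j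
    unfolding matrix_matrix_mult_def by (simp add: Cauchy_Schwarz_ineq_sum)
  have "(norm (A ** B))\<^sup>2 \<le> (\<Sum>i\<in>UNIV. \<Sum>j\<in>UNIV. (\<Sum>k\<in>UNIV. (A$i$k)\<^sup>2) * (\<Sum>k\<in>UNIV. (B$k$j)\<^sup>2))"
    unfolding norm_matrix_sq by (intro sum_mono entry)
  also have "\<dots> = (\<Sum>i\<in>UNIV. \<Sum>k\<in>UNIV. (A$i$k)\<^sup>2) * (\<Sum>j\<in>UNIV. \<Sum>k\<in>UNIV. (B$k$j)\<^sup>2)"
    by (rule sum_product[symmetric])
  also have "(\<Sum>j\<in>UNIV. \<Sum>k\<in>UNIV. (B$k$j)\<^sup>2) = (\<Sum>k\<in>UNIV. \<Sum>j\<in>UNIV. (B$k$j)\<^sup>2)"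
    by (rule sum.swap)
  also have "(\<Sum>i\<in>UNIV. \<Sum>k\<in>UNIV. (A$i$k)\<^sup>2) * (\<Sum>k\<in>UNIV. \<Sum>j\<in>UNIV. (B$k$j)\<^sup>2)
      = (norm A * norm B)\<^sup>2"
    by (simp add: norm_matrix_sq power_mult_distrib)
  finally show ?thesis
    by (simp add: power2_le_iff_abs_le)
qed

lemma norm_transpose [simp]: "norm (transpose A) = norm A"
  for A :: "real^'n^'m"
proof -
  have "(norm (transpose A))\<^sup>2 = (norm A)\<^sup>2"
    unfolding norm_matrix_sq transpose_def using sum.swap[of "\<lambda>i j. (A$j$i)\<^sup>2"] by simp
  then show ?thesis
    by (simp add: power2_eq_iff_nonneg)
qed

lemma norm_matrix_mult_diff_le:
  "norm (A ** B - A' ** B') \<le> norm (A - A') * norm B + norm A' * norm (B - B')"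
  for A A' :: "real^'n^'m" and B B' :: "real^'p^'n"
proof -
  have "A ** B - A' ** B' = (A - A') ** B + A' ** (B - B')"
    by (simp add: matrix_diff_ldistrib matrix_diff_rdistrib)
  then have "norm (A ** B - A' ** B') \<le> norm ((A - A') ** B) + norm (A' ** (B - B'))"
    by (metis norm_triangle_ineq)
  also have "\<dots> \<le> norm (A - A') * norm B + norm A' * norm (B - B')"
    by (intro add_mono norm_matrix_mult_le)
  finally show ?thesis .
qed

lemma norm_matrix_mult3_diff_le:
  "norm (A ** B ** C - A' ** B' ** C')
     \<le> norm (A - A') * norm B * norm C + norm A' * norm (B - B') * norm C
       + norm A' * norm B' * norm (C - C')"
  for A A' :: "real^'n^'m" and B B' :: "real^'p^'n" and C C' :: "real^'q^'p"
proof -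
  have "norm (A ** B ** C - A' ** B' ** C')
      \<le> norm (A ** B - A' ** B') * norm C + norm (A' ** B') * norm (C - C')"
    by (rule norm_matrix_mult_diff_le)
  also have "\<dots> \<le> (norm (A - A') * norm B + norm A' * norm (B - B')) * norm C
      + norm A' * norm B' * norm (C - C')"
    by (rule add_mono[OF mult_right_mono[OF norm_matrix_mult_diff_le norm_ge_zero]
          mult_right_mono[OF norm_matrix_mult_le norm_ge_zero]])
  finally show ?thesis
    by (simp add: algebra_simps)
qed

lemma norm_matrix_mult3_diff_le_uniform:
  fixes A A' :: "real^'n^'m" and B B' :: "real^'p^'n" and C C' :: "real^'q^'p"
  assumes "norm A' \<le> M" "norm B \<le> M" "norm B' \<le> M" "norm C \<le> M"
    and "norm (A - A') \<le> M * \<delta>" "norm (B - B') \<le> M * \<delta>" "norm (C - C') \<le> M * \<delta>" and "0 \<le> \<delta>"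
  shows "norm (A ** B ** C - A' ** B' ** C') \<le> 3 * M ^ 3 * \<delta>"
proof -
  have "0 \<le> M"
    using assms(2) norm_ge_zero order_trans by blast
  with assms have "norm (A ** B ** C - A' ** B' ** C')
      \<le> (M * \<delta>) * M * M + M * (M * \<delta>) * M + M * M * (M * \<delta>)"
    by (intro order_trans[OF norm_matrix_mult3_diff_le] add_mono mult_mono) simp_all
  then show ?thesis
    by (simp add: power3_eq_cube algebra_simps)
qed

lemma inner_matrix_mult_left: "inner (A ** H) M = inner H (transpose A ** M)"
  for A :: "real^'n^'m" and H :: "real^'p^'n"
proof -
  have "inner (A ** H) M = (\<Sum>i\<in>UNIV. \<Sum>j\<in>UNIV. \<Sum>l\<in>UNIV. A$i$l * H$l$j * M$i$j)"
    by (simp add: inner_vec_def matrix_matrix_mult_def sum_distrib_right)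
  also have "\<dots> = (\<Sum>i\<in>UNIV. \<Sum>l\<in>UNIV. \<Sum>j\<in>UNIV. A$i$l * H$l$j * M$i$j)"
    by (rule sum.cong[OF refl], rule sum.swap)
  also have "\<dots> = (\<Sum>l\<in>UNIV. \<Sum>i\<in>UNIV. \<Sum>j\<in>UNIV. A$i$l * H$l$j * M$i$j)"
    by (rule sum.swap)
  also have "\<dots> = (\<Sum>l\<in>UNIV. \<Sum>j\<in>UNIV. \<Sum>i\<in>UNIV. A$i$l * H$l$j * M$i$j)"
    by (rule sum.cong[OF refl], rule sum.swap)
  also have "\<dots> = inner H (transpose A ** M)"
    by (simp add: inner_vec_def matrix_matrix_mult_def transpose_def sum_distrib_left ac_simps)
  finally show ?thesis .
qed

lemma inner_matrix_mult_right: "inner (H ** B) M = inner H (M ** transpose B)"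
  for H :: "real^'n^'m" and B :: "real^'p^'n"
proof -
  have "inner (H ** B) M = (\<Sum>i\<in>UNIV. \<Sum>j\<in>UNIV. \<Sum>l\<in>UNIV. H$i$l * B$l$j * M$i$j)"
    by (simp add: inner_vec_def matrix_matrix_mult_def sum_distrib_right)
  also have "\<dots> = (\<Sum>i\<in>UNIV. \<Sum>l\<in>UNIV. \<Sum>j\<in>UNIV. H$i$l * B$l$j * M$i$j)"
    by (rule sum.cong[OF refl], rule sum.swap)
  also have "\<dots> = inner H (M ** transpose B)"
    by (simp add: inner_vec_def matrix_matrix_mult_def transpose_def sum_distrib_left ac_simps)
  finally show ?thesis .
qed

lemma inner_matrix_mult3: "inner (A ** H ** B) M = inner H (transpose A ** M ** transpose B)"
  for A :: "real^'n^'m" and H :: "real^'p^'n" and B :: "real^'q^'p"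
  using inner_matrix_mult_right[of "A ** H" B M] inner_matrix_mult_left[of A H "M ** transpose B"]
  by (simp add: matrix_mul_assoc)

lemma bounded_linear_matrix_sandwich: "bounded_linear (\<lambda>H. A ** H ** B)"
  for A :: "real^'n^'m" and B :: "real^'q^'p"
proof -
  have "linear (\<lambda>H. A ** H ** B)"
    by (rule linearI)
      (simp_all add: matrix_add_ldistrib matrix_add_rdistrib matrix_scalar_ac scalar_matrix_assoc)
  then show ?thesis
    by (simp add: linear_conv_bounded_linear)
qed

lemma congruence_diag_entry: "(transpose U ** A ** U)$i$i = column i U \<bullet> (A *v column i U)"
  for A U :: "real^'n^'n"
proof -
  have "(transpose U ** A ** U)$i$i = (\<Sum>k\<in>UNIV. \<Sum>l\<in>UNIV. U$l$i * A$l$k * U$k$i)"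
    by (simp add: matrix_matrix_mult_def transpose_def sum_distrib_right)
  also have "\<dots> = (\<Sum>l\<in>UNIV. \<Sum>k\<in>UNIV. U$l$i * A$l$k * U$k$i)"
    by (rule sum.swap)
  also have "\<dots> = column i U \<bullet> (A *v column i U)"
    by (simp add: inner_vec_def matrix_vector_mult_def column_def sum_distrib_left ac_simps)
  finally show ?thesis .
qed

lemma orthogonal_similar_mult:
  assumes "orthogonal_matrix U"
  shows "transpose U ** (A ** B) ** U = (transpose U ** A ** U) ** (transpose U ** B ** U)"
proof -
  have "(transpose U ** A ** U) ** (transpose U ** B ** U) = transpose U ** A ** (U ** transpose U) ** B ** U"
    by (simp only: matrix_mul_assoc)
  with assms show ?thesis
    by (simp add: orthogonal_matrix_def matrix_mul_assoc)
qed

section \<open>Products of factors and the gradient of the loss\<close>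

lemma prodmat_cong: "(\<And>k. k < K \<Longrightarrow> X k = Y k) \<Longrightarrow> prodmat K X = prodmat K Y"
  by (induction K) auto

lemma prodmat_add: "prodmat (m + n) W = prodmat m (\<lambda>k. W (k + n)) ** prodmat n W"
  by (induction m) (simp_all add: matrix_mul_assoc)

lemma prodmat_fun_upd:
  assumes "n < N"
  shows "prodmat N (W(n := X)) = prodmat (N - Suc n) (\<lambda>k. W (k + Suc n)) ** X ** prodmat n W"
proof -
  have N: "N = (N - Suc n) + Suc n"
    using assms by simp
  have "prodmat N (W(n := X))
      = prodmat (N - Suc n) (\<lambda>k. (W(n := X)) (k + Suc n)) ** prodmat (Suc n) (W(n := X))"
    by (subst N, rule prodmat_add)
  also have "prodmat (N - Suc n) (\<lambda>k. (W(n := X)) (k + Suc n)) = prodmat (N - Suc n) (\<lambda>k. W (k + Suc n))"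
    by (rule prodmat_cong) simp
  also have "prodmat (Suc n) (W(n := X)) = X ** prodmat n W"
    using prodmat_cong[of n "W(n := X)" W] by simp
  finally show ?thesis
    by (simp only: matrix_mul_assoc)
qed

lemma prodmat_orthogonal_similar:
  assumes "orthogonal_matrix U"
  shows "transpose U ** prodmat K X ** U = prodmat K (\<lambda>k. transpose U ** X k ** U)"
  by (induction K) (use assms in \<open>simp_all add: orthogonal_matrix orthogonal_similar_mult\<close>)

lemma norm_prodmat_le:
  fixes X :: "nat \<Rightarrow> real^'n^'n"
  assumes "\<And>k. k < K \<Longrightarrow> norm (X k) \<le> R"
  shows "norm (prodmat K X) \<le> norm (mat 1 :: real^'n^'n) * R ^ K"
  using assms
proof (induction K)
  case (Suc K)
  have "norm (prodmat (Suc K) X) \<le> norm (X K) * norm (prodmat K X)"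
    by (simp add: norm_matrix_mult_le)
  also have "\<dots> \<le> R * (norm (mat 1 :: real^'n^'n) * R ^ K)"
    using Suc order_trans[OF norm_ge_zero Suc.prems[of K]] by (intro mult_mono) auto
  finally show ?case
    by (simp add: ac_simps)
qed simp

lemma norm_prodmat_diff_le:
  fixes X Y :: "nat \<Rightarrow> real^'n^'n"
  assumes "\<And>k. k < K \<Longrightarrow> norm (X k) \<le> R" and "\<And>k. k < K \<Longrightarrow> norm (Y k) \<le> R"
    and "\<And>k. k < K \<Longrightarrow> norm (X k - Y k) \<le> \<delta>"
  shows "norm (prodmat K X - prodmat K Y) \<le> norm (mat 1 :: real^'n^'n) * real K * R ^ (K - 1) * \<delta>"
  using assms
proof (induction K)
  case (Suc K)
  let ?c = "norm (mat 1 :: real^'n^'n)"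
  have R: "0 \<le> R" and \<delta>: "0 \<le> \<delta>"
    using Suc.prems norm_ge_zero[of "X K"] norm_ge_zero[of "X K - Y K"] by (meson le_less_trans lessI order.trans)+
  have "norm (prodmat (Suc K) X - prodmat (Suc K) Y)
      \<le> norm (X K - Y K) * norm (prodmat K X) + norm (Y K) * norm (prodmat K X - prodmat K Y)"
    by (simp add: norm_matrix_mult_diff_le)
  also have "\<dots> \<le> \<delta> * (?c * R ^ K) + R * (?c * real K * R ^ (K - 1) * \<delta>)"
    using Suc R \<delta> by (intro add_mono mult_mono norm_prodmat_le) auto
  also have "\<dots> = ?c * real (Suc K) * R ^ K * \<delta>"
    by (cases K) (simp_all add: algebra_simps)
  finally show ?case
    by simp
qed simp

lemma norm_prodmat_le_uniform:
  fixes Z :: "nat \<Rightarrow> real^'n^'n"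
  assumes m: "m \<le> N" and R: "1 \<le> R" and Z: "\<And>k. k < m \<Longrightarrow> norm (Z k) \<le> R"
  shows "norm (prodmat m Z) \<le> norm (mat 1 :: real^'n^'n) * real (Suc N) * R ^ N"
proof -
  have "R ^ m \<le> R ^ N"
    using m R by (rule power_increasing)
  also have "\<dots> \<le> real (Suc N) * R ^ N"
    using R by (simp add: mult_le_cancel_right1)
  finally have "norm (mat 1 :: real^'n^'n) * R ^ m \<le> norm (mat 1 :: real^'n^'n) * (real (Suc N) * R ^ N)"
    by (rule mult_left_mono) simp
  moreover have "norm (prodmat m Z) \<le> norm (mat 1 :: real^'n^'n) * R ^ m"
    using Z by (rule norm_prodmat_le)
  ultimately show ?thesis
    by (simp add: mult.assoc)
qed

lemma norm_prodmat_diff_le_uniform: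
  fixes Z Z' :: "nat \<Rightarrow> real^'n^'n"
  assumes m: "m \<le> N" and R: "1 \<le> R" and \<delta>: "0 \<le> \<delta>"
    and "\<And>k. k < m \<Longrightarrow> norm (Z k) \<le> R" and "\<And>k. k < m \<Longrightarrow> norm (Z' k) \<le> R"
    and "\<And>k. k < m \<Longrightarrow> norm (Z k - Z' k) \<le> \<delta>"
  shows "norm (prodmat m Z - prodmat m Z') \<le> norm (mat 1 :: real^'n^'n) * real (Suc N) * R ^ N * \<delta>"
proof -
  have "real m * R ^ (m - 1) \<le> real (Suc N) * R ^ N"
    using m R by (intro mult_mono power_increasing) auto
  from mult_right_mono[OF mult_left_mono[OF this norm_ge_zero[of "mat 1 :: real^'n^'n"]] \<delta>]
    norm_prodmat_diff_le[of m Z R Z' \<delta>] assms(4-6)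
  show ?thesis
    by (simp add: mult.assoc)
qed

definition loss_grad :: "nat \<Rightarrow> real^'d^'d \<Rightarrow> (nat \<Rightarrow> real^'d^'d) \<Rightarrow> nat \<Rightarrow> real^'d^'d" where
  "loss_grad N S W n = (1 / real N) *\<^sub>R
     (transpose (prodmat (N - Suc n) (\<lambda>k. W (k + Suc n))) ** (prodmat N W - S) ** transpose (prodmat n W))"

lemma has_gradient_lossN:
  assumes "n < N"
  shows "GDERIV (\<lambda>X. lossN N S (W(n := X))) (W n) :> loss_grad N S W n"
proof -
  define A B where "A = prodmat (N - Suc n) (\<lambda>k. W (k + Suc n))" and "B = prodmat n W"
  have P: "prodmat N W = A ** W n ** B"
    using prodmat_fun_upd[OF assms, of W "W n"] by (simp add: A_def B_def)
  have loss: "(\<lambda>X. lossN N S (W(n := X)))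
      = (\<lambda>X. (1 / (2 * real N)) * inner (A ** X ** B - S) (A ** X ** B - S))"
    by (simp add: lossN_def prodmat_fun_upd[OF assms] A_def B_def power2_norm_eq_inner)
  have G: "loss_grad N S W n = (1 / real N) *\<^sub>R (transpose A ** (A ** W n ** B - S) ** transpose B)"
    unfolding loss_grad_def A_def[symmetric] B_def[symmetric] P ..
  have affine: "((\<lambda>X. A ** X ** B - S) has_derivative (\<lambda>H. A ** H ** B)) (at X)" for X
    using has_derivative_diff[OF bounded_linear_imp_has_derivative[OF bounded_linear_matrix_sandwich]
        has_derivative_const[of S]]
    by simp
  have "((\<lambda>X. (1 / (2 * real N)) * inner (A ** X ** B - S) (A ** X ** B - S)) has_derivative
      (\<lambda>H. (1 / (2 * real N)) * (inner (A ** W n ** B - S) (A ** H ** B) + inner (A ** H ** B) (A ** W n ** B - S))))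
      (at (W n))"
    by (intro has_derivative_mult_right has_derivative_inner affine)
  then show ?thesis
    unfolding gderiv_def loss G
    by (rule has_derivative_eq_rhs)
      (simp add: fun_eq_iff inner_commute[of "A ** W n ** B - S"] inner_matrix_mult3)
qed

lemma gderiv_unique: "GDERIV f x :> G \<Longrightarrow> GDERIV f x :> G' \<Longrightarrow> G = G'"
  unfolding gderiv_def
  by (metis (no_types) has_derivative_unique inner_commute vector_eq_rdot)

lemma grad_flow_ode:
  assumes "grad_flow N S W" and "0 \<le> t" and "n < N"
  shows "(W n has_vector_derivative - loss_grad N S (\<lambda>k. W k t) n) (at t within {0..})"
  using assms has_gradient_lossN[of n N S "\<lambda>k. W k t"] gderiv_unique
  unfolding grad_flow_def by metis

lemma loss_grad_cong:
  assumes "n < N" and "\<And>k. k < N \<Longrightarrow> X k = Y k"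
  shows "loss_grad N S X n = loss_grad N S Y n"
proof -
  have "prodmat (N - Suc n) (\<lambda>k. X (k + Suc n)) = prodmat (N - Suc n) (\<lambda>k. Y (k + Suc n))"
    by (rule prodmat_cong) (simp add: assms(2))
  moreover have "prodmat n X = prodmat n Y" and "prodmat N X = prodmat N Y"
    using assms by (auto intro: prodmat_cong)
  ultimately show ?thesis
    unfolding loss_grad_def by simp
qed

lemma loss_grad_orthogonal_similar:
  fixes U :: "real^'d^'d"
  assumes U: "orthogonal_matrix U"
  shows "transpose U ** loss_grad N S W n ** U
    = loss_grad N (transpose U ** S ** U) (\<lambda>k. transpose U ** W k ** U) n"
proof -
  have tr: "transpose (transpose U ** M ** U) = transpose U ** transpose M ** U" for M :: "real^'d^'d"
    by (simp add: matrix_transpose_mul matrix_mul_assoc)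
  have diff: "transpose U ** (P - S) ** U = transpose U ** P ** U - transpose U ** S ** U" for P
    by (simp add: matrix_diff_ldistrib matrix_diff_rdistrib)
  have scale: "transpose U ** (c *\<^sub>R M) ** U = c *\<^sub>R (transpose U ** M ** U)" for c M
    by (simp add: matrix_scalar_ac scalar_matrix_assoc)
  show ?thesis
    unfolding loss_grad_def scale orthogonal_similar_mult[OF U] diff tr[symmetric]
      prodmat_orthogonal_similar[OF U] ..
qed

lemma grad_flow_orthogonal_similar:
  assumes U: "orthogonal_matrix U" and flow: "grad_flow N S W"
  shows "grad_flow N (transpose U ** S ** U) (\<lambda>n t. transpose U ** W n t ** U)"
  unfolding grad_flow_def
proof (intro allI impI exI conjI)
  fix t :: real and n assume "0 \<le> t" "n < N"
  show "GDERIV (\<lambda>X. lossN N (transpose U ** S ** U) ((\<lambda>k. transpose U ** W k t ** U)(n := X)))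
      (transpose U ** W n t ** U) :> loss_grad N (transpose U ** S ** U) (\<lambda>k. transpose U ** W k t ** U) n"
    using has_gradient_lossN[OF \<open>n < N\<close>, of _ "\<lambda>k. transpose U ** W k t ** U"] by simp
  have "((\<lambda>s. transpose U ** W n s ** U) has_vector_derivative
      transpose U ** (- loss_grad N S (\<lambda>k. W k t) n) ** U) (at t within {0..})"
    by (rule bounded_linear.has_vector_derivative[OF bounded_linear_matrix_sandwich
          grad_flow_ode[OF flow \<open>0 \<le> t\<close> \<open>n < N\<close>]])
  then show "((\<lambda>s. transpose U ** W n s ** U) has_vector_derivative
      - loss_grad N (transpose U ** S ** U) (\<lambda>k. transpose U ** W k t ** U) n) (at t within {0..})"
    by (simp add: linear_neg[OF bounded_linear.linear[OF bounded_linear_matrix_sandwich]] loss_grad_orthogonal_similar[OF U])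
qed

lemma loss_grad_lipschitz:
  fixes X Y :: "nat \<Rightarrow> real^'d^'d"
  assumes R: "1 \<le> R" and X: "\<And>k. k < N \<Longrightarrow> norm (X k) \<le> R" and Y: "\<And>k. k < N \<Longrightarrow> norm (Y k) \<le> R"
    and XY: "\<And>k. k < N \<Longrightarrow> norm (X k - Y k) \<le> \<delta>" and n: "n < N"
  shows "norm (loss_grad N S X n - loss_grad N S Y n)
    \<le> 3 * (norm (mat 1 :: real^'d^'d) * real (Suc N) * R ^ N + norm S) ^ 3 * \<delta>"
proof -
  define P where "P = norm (mat 1 :: real^'d^'d) * real (Suc N) * R ^ N"
  define M where "M = P + norm S"
  define A A' where "A = prodmat (N - Suc n) (\<lambda>k. X (k + Suc n))"
    and "A' = prodmat (N - Suc n) (\<lambda>k. Y (k + Suc n))"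
  define B B' where "B = prodmat n X" and "B' = prodmat n Y"
  have \<delta>: "0 \<le> \<delta>"
    using XY[OF n] norm_ge_zero order_trans by blast
  have PM: "P \<le> M" "P * \<delta> \<le> M * \<delta>"
    using \<delta> by (simp_all add: M_def mult_right_mono)
  have bound: "norm (prodmat m Z) \<le> P" if "m \<le> N" "\<And>k. k < m \<Longrightarrow> norm (Z k) \<le> R"
    for m and Z :: "nat \<Rightarrow> real^'d^'d"
    unfolding P_def using that R by (intro norm_prodmat_le_uniform)
  have lip: "norm (prodmat m Z - prodmat m Z') \<le> M * \<delta>"
    if "m \<le> N" "\<And>k. k < m \<Longrightarrow> norm (Z k) \<le> R" "\<And>k. k < m \<Longrightarrow> norm (Z' k) \<le> R"
      "\<And>k. k < m \<Longrightarrow> norm (Z k - Z' k) \<le> \<delta>"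
    for m and Z Z' :: "nat \<Rightarrow> real^'d^'d"
  proof -
    have "norm (prodmat m Z - prodmat m Z') \<le> P * \<delta>"
      unfolding P_def using that R \<delta> by (intro norm_prodmat_diff_le_uniform)
    with PM show ?thesis
      by linarith
  qed
  have shift: "k + Suc n < N" if "k < N - Suc n" for k
    using that by simp
  have AB: "norm A \<le> M" "norm A' \<le> M" "norm B \<le> M" "norm B' \<le> M"
    unfolding A_def A'_def B_def B'_def using n X Y shift PM by (auto intro!: order_trans[OF bound])
  have AB_diff: "norm (A - A') \<le> M * \<delta>" "norm (B - B') \<le> M * \<delta>"
    unfolding A_def A'_def B_def B'_def using n X Y XY shift by (auto intro!: lip)
  have "norm (prodmat N X) \<le> P" "norm (prodmat N Y) \<le> P" "norm (prodmat N X - prodmat N Y) \<le> M * \<delta>"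
    using X Y XY by (auto intro!: bound lip)
  then have Q: "norm (prodmat N X - S) \<le> M" "norm (prodmat N Y - S) \<le> M"
      "norm ((prodmat N X - S) - (prodmat N Y - S)) \<le> M * \<delta>"
    using norm_triangle_ineq4[of "prodmat N X" S] norm_triangle_ineq4[of "prodmat N Y" S]
    unfolding M_def by auto
  define D where "D = transpose A ** (prodmat N X - S) ** transpose B - transpose A' ** (prodmat N Y - S) ** transpose B'"
  have D: "norm D \<le> 3 * M ^ 3 * \<delta>"
    unfolding D_def using AB AB_diff Q \<delta>
    by (intro norm_matrix_mult3_diff_le_uniform) (simp_all flip: transpose_diff)
  have "norm (loss_grad N S X n - loss_grad N S Y n) = norm D / real N"
    unfolding loss_grad_def A_def A'_def B_def B'_def D_def
    by (simp flip: scaleR_diff_right add: divide_inverse_commute)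
  also have "\<dots> \<le> norm D"
    using n by (simp add: divide_le_eq mult_le_cancel_left1)
  finally show ?thesis
    using D by (simp add: M_def P_def)
qed

section \<open>Diagonal matrices\<close>

definition diag_mat :: "('n::finite \<Rightarrow> 'a::zero) \<Rightarrow> 'a^'n^'n" where
  "diag_mat d = (\<chi> i j. if i = j then d i else 0)"

lemma diag_mat_nth [simp]: "diag_mat d $ i $ j = (if i = j then d i else 0)"
  by (simp add: diag_mat_def)

lemma diag_mat_mult [simp]: "diag_mat d ** diag_mat e = diag_mat (\<lambda>i. d i * e i)"
  for d e :: "'n::finite \<Rightarrow> 'a::semiring_1"
proof -
  have "(\<Sum>k\<in>UNIV. (if i = k then d i else 0) * (if k = j then e k else 0)) = (if i = j then d i * e i else 0)"
    for i j
    by (simp add: if_distrib[of "\<lambda>x. x * _"] sum.delta cong: if_cong)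
  then show ?thesis
    by (simp add: vec_eq_iff matrix_matrix_mult_def)
qed

lemma diag_mat_diff [simp]: "diag_mat d - diag_mat e = diag_mat (\<lambda>i. d i - e i)"
  for d e :: "'n::finite \<Rightarrow> 'a::ab_group_add"
  by (simp add: vec_eq_iff)

lemma scaleR_diag_mat [simp]: "c *\<^sub>R diag_mat d = diag_mat (\<lambda>i. c * d i)"
  by (simp add: vec_eq_iff)

lemma transpose_diag_mat [simp]: "transpose (diag_mat d) = diag_mat d"
  by (simp add: vec_eq_iff transpose_def)

lemma mat_eq_diag_mat: "mat c = diag_mat (\<lambda>_. c)"
  by (simp add: vec_eq_iff mat_def)

lemma inner_diag_mat: "inner A (diag_mat e) = (\<Sum>i\<in>UNIV. A$i$i * e i)"
  by (simp add: inner_vec_def if_distrib sum.delta cong: if_cong)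

lemma prodmat_const_diag_mat: "prodmat K (\<lambda>_. diag_mat d) = diag_mat (\<lambda>i. d i ^ K)"
  for d :: "'n::finite \<Rightarrow> real"
  by (induction K) (simp_all add: mat_eq_diag_mat)

lemma loss_grad_const_diag_mat:
  assumes "n < N"
  shows "loss_grad N (diag_mat s) (\<lambda>_. diag_mat d) n = diag_mat (\<lambda>i. d i ^ (N - 1) * (d i ^ N - s i) / real N)"
proof -
  have exponent: "N - Suc n + n = N - 1"
    using assms by simp
  have powers: "d i ^ (N - Suc n) * (d i ^ N - s i) * d i ^ n = d i ^ (N - 1) * (d i ^ N - s i)" for i
  proof -
    have "d i ^ (N - Suc n) * (d i ^ N - s i) * d i ^ n = d i ^ (N - Suc n + n) * (d i ^ N - s i)"
      by (simp only: power_add mult_ac)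
    then show ?thesis
      by (simp only: exponent)
  qed
  show ?thesis
    unfolding loss_grad_def prodmat_const_diag_mat transpose_diag_mat diag_mat_diff diag_mat_mult
      scaleR_diag_mat
    by (simp add: powers)
qed

definition diag_part :: "real^'n^'n \<Rightarrow> real^'n^'n" where
  "diag_part A = diag_mat (\<lambda>i. A$i$i)"

lemma bounded_linear_diag_part: "bounded_linear diag_part"
proof -
  have "linear diag_part"
    by (rule linearI) (simp_all add: diag_part_def vec_eq_iff)
  then show ?thesis
    by (simp add: linear_conv_bounded_linear)
qed

lemma norm_diag_part_le: "norm (diag_part A) \<le> norm A"
proof -
  have "(norm (diag_part A))\<^sup>2 \<le> (norm A)\<^sup>2"
    unfolding norm_matrix_sq by (intro sum_mono) (simp add: diag_part_def)
  then show ?thesis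
    by (simp add: power2_le_iff_abs_le)
qed

definition diag_mean :: "nat \<Rightarrow> (nat \<Rightarrow> real^'n^'n) \<Rightarrow> real^'n^'n" where
  "diag_mean N X = (1 / real N) *\<^sub>R (\<Sum>n<N. diag_part (X n))"

lemma diag_mean_eq_diag_mat: "diag_mean N X = diag_mat (\<lambda>i. (\<Sum>n<N. X n $ i $ i) / real N)"
  by (simp add: diag_mean_def diag_part_def vec_eq_iff sum_component)

lemma diag_mean_const:
  assumes "1 \<le> N" and "\<And>n. n < N \<Longrightarrow> X n = diag_mat d"
  shows "diag_mean N X = diag_mat d"
  using assms by (simp add: diag_mean_eq_diag_mat)

lemma norm_diag_mean_le:
  assumes "1 \<le> N" and "\<And>n. n < N \<Longrightarrow> norm (X n) \<le> R"
  shows "norm (diag_mean N X) \<le> R"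
proof -
  have "norm (\<Sum>n<N. diag_part (X n)) \<le> (\<Sum>n<N. R)"
    using assms(2) by (intro order_trans[OF norm_sum] sum_mono order_trans[OF norm_diag_part_le]) auto
  then show ?thesis
    using assms(1) by (simp add: diag_mean_def field_simps)
qed

lemma has_vector_derivative_diag_mean:
  assumes "\<And>n. n < N \<Longrightarrow> ((\<lambda>t. X n t) has_vector_derivative X' n) F"
  shows "((\<lambda>t. diag_mean N (\<lambda>n. X n t)) has_vector_derivative diag_mean N X') F"
  unfolding diag_mean_def
  by (intro bounded_linear.has_vector_derivative[OF bounded_linear_scaleR_right]
      has_vector_derivative_sum bounded_linear.has_vector_derivative[OF bounded_linear_diag_part] assms)
    simp

lemma diag_mean_minus [simp]: "diag_mean N (\<lambda>n. - X n) = - diag_mean N X"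
  by (simp add: diag_mean_eq_diag_mat vec_eq_iff sum_negf)

lemma sum_inner_diff_diag_mean:
  assumes "1 \<le> N"
  shows "(\<Sum>n<N. inner (X n - diag_mean N X) (diag_mat e)) = 0"
proof -
  define m where "m i = (\<Sum>n<N. X n $ i $ i) / real N" for i
  have "(\<Sum>n<N. inner (X n - diag_mean N X) (diag_mat e))
      = (\<Sum>n<N. \<Sum>i\<in>UNIV. (X n $ i $ i - m i) * e i)"
    by (simp add: inner_diag_mat diag_mean_eq_diag_mat m_def)
  also have "\<dots> = (\<Sum>i\<in>UNIV. (\<Sum>n<N. X n $ i $ i - m i) * e i)"
    unfolding sum_distrib_right by (rule sum.swap)
  also have "\<dots> = 0"
    using assms by (simp add: sum_subtractf m_def)
  finally show ?thesis .
qed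

lemma sum_inner_deviation_loss_grad:
  assumes "1 \<le> N"
  shows "(\<Sum>n<N. inner (X n - diag_mean N X)
            (loss_grad N (diag_mat s) X n - diag_mean N (loss_grad N (diag_mat s) X)))
       = (\<Sum>n<N. inner (X n - diag_mean N X)
            (loss_grad N (diag_mat s) X n - loss_grad N (diag_mat s) (\<lambda>_. diag_mean N X) n))"
proof -
  let ?G = "loss_grad N (diag_mat s) X"
  obtain m where m: "diag_mean N X = diag_mat m"
    using diag_mean_eq_diag_mat by blast
  obtain g where g: "diag_mean N ?G = diag_mat g"
    using diag_mean_eq_diag_mat by blast
  define c where "c i = m i ^ (N - 1) * (m i ^ N - s i) / real N" for i
  have diagonal_term: "(\<Sum>n<N. inner (X n - diag_mean N X) (?G n - diag_mat e))
      = (\<Sum>n<N. inner (X n - diag_mean N X) (?G n))" for e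
    using sum_inner_diff_diag_mean[OF assms, of X e] by (simp add: inner_diff_right sum_subtractf)
  have "(\<Sum>n<N. inner (X n - diag_mean N X) (?G n - loss_grad N (diag_mat s) (\<lambda>_. diag_mean N X) n))
      = (\<Sum>n<N. inner (X n - diag_mean N X) (?G n - diag_mat c))"
    unfolding m c_def by (intro sum.cong refl) (simp add: loss_grad_const_diag_mat)
  then show ?thesis
    unfolding g diagonal_term by (rule sym)
qed

section \<open>The balanced diagonal solution\<close>

lemma exp_lower_bound_of_deriv_ge:
  fixes h :: "real \<Rightarrow> real"
  assumes T: "0 \<le> T"
    and deriv: "\<And>t. t \<in> {0..T} \<Longrightarrow> (h has_real_derivative h' t) (at t within {0..T})"
    and ge: "\<And>t. t \<in> {0..T} \<Longrightarrow> c * h t \<le> h' t"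
  shows "h 0 * exp (c * T) \<le> h T"
proof -
  define g where "g t = h t * exp (- c * t)" for t
  have "(g has_real_derivative (h' t - c * h t) * exp (- c * t)) (at t within {0..T})"
    if "t \<in> {0..T}" for t
    unfolding g_def using deriv[OF that]
    by (auto intro!: derivative_eq_intros simp: algebra_simps)
  then obtain s where s: "s \<in> {0..T}" and "g T - g 0 = (h' s - c * h s) * exp (- c * s) * (T - 0)"
    using mvt_very_simple[OF T, of g "\<lambda>s. (*) ((h' s - c * h s) * exp (- c * s))"]
    unfolding has_field_derivative_def by auto
  moreover have "0 \<le> (h' s - c * h s) * exp (- c * s) * (T - 0)"
    using ge[OF s] T by simp
  ultimately have "h 0 \<le> h T * exp (- c * T)"
    by (simp add: g_def)
  then have "h 0 * exp (c * T) \<le> h T * exp (- c * T) * exp (c * T)"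
    by (rule mult_right_mono) simp
  then show ?thesis
    by (simp add: mult.assoc flip: exp_add)
qed

definition deviation_energy :: "nat \<Rightarrow> (nat \<Rightarrow> real^'n^'n) \<Rightarrow> real" where
  "deviation_energy N X = (\<Sum>k<N. (norm (X k - diag_mean N X))\<^sup>2)"

lemma deviation_energy_nonneg: "0 \<le> deviation_energy N X"
  by (simp add: deviation_energy_def sum_nonneg)

lemma deviation_energy_eq_0_iff: "deviation_energy N X = 0 \<longleftrightarrow> (\<forall>k<N. X k = diag_mean N X)"
  by (auto simp: deviation_energy_def sum_nonneg_eq_0_iff)

lemma has_real_derivative_deviation_energy:
  assumes "\<And>k. k < N \<Longrightarrow> ((\<lambda>t. X k t) has_vector_derivative X' k) (at t within S)"
  shows "((\<lambda>t. deviation_energy N (\<lambda>k. X k t)) has_real_derivative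
      2 * (\<Sum>k<N. inner (X k t - diag_mean N (\<lambda>k. X k t)) (X' k - diag_mean N X'))) (at t within S)"
proof -
  let ?D = "\<lambda>k. X k t - diag_mean N (\<lambda>k. X k t)" and ?D' = "\<lambda>k. X' k - diag_mean N X'"
  have "((\<lambda>t. deviation_energy N (\<lambda>k. X k t)) has_real_derivative
      (\<Sum>k<N. inner (?D k) (?D' k) + inner (?D' k) (?D k))) (at t within S)"
    unfolding has_real_derivative_iff_has_vector_derivative deviation_energy_def power2_norm_eq_inner
    using assms
    by (intro has_vector_derivative_sum bounded_bilinear.has_vector_derivative[OF bounded_bilinear_inner]
        has_vector_derivative_diff has_vector_derivative_diag_mean) auto
  then show ?thesis
    by (rule DERIV_cong) (simp add: inner_commute[of "?D' _"] sum_distrib_left)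
qed

lemma norm_deviation_le_sqrt_deviation_energy:
  assumes "k < N"
  shows "norm (X k - diag_mean N X) \<le> sqrt (deviation_energy N X)"
proof -
  have "(norm (X k - diag_mean N X))\<^sup>2 \<le> deviation_energy N X"
    unfolding deviation_energy_def using assms by (intro member_le_sum) auto
  then show ?thesis
    by (simp add: real_le_rsqrt)
qed

lemma sum_inner_deviation_loss_grad_ge:
  assumes N: "1 \<le> N"
    and lip: "\<And>k. k < N \<Longrightarrow> norm (loss_grad N (diag_mat s) X k - loss_grad N (diag_mat s) (\<lambda>_. diag_mean N X) k)
      \<le> L * sqrt (deviation_energy N X)"
  shows "- (\<Sum>k<N. inner (X k - diag_mean N X)
         (loss_grad N (diag_mat s) X k - diag_mean N (loss_grad N (diag_mat s) X)))
      \<le> real N * L * deviation_energy N X"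
proof -
  let ?A = "diag_mean N X" and ?\<delta> = "sqrt (deviation_energy N X)"
  have "- (?\<delta> * (L * ?\<delta>))
      \<le> inner (X k - ?A) (loss_grad N (diag_mat s) X k - loss_grad N (diag_mat s) (\<lambda>_. ?A) k)"
    if k: "k < N" for k
  proof -
    have "norm (X k - ?A) * norm (loss_grad N (diag_mat s) X k - loss_grad N (diag_mat s) (\<lambda>_. ?A) k)
        \<le> ?\<delta> * (L * ?\<delta>)"
      using norm_deviation_le_sqrt_deviation_energy[OF k] lip[OF k] deviation_energy_nonneg
      by (intro mult_mono) auto
    then show ?thesis
      using Cauchy_Schwarz_ineq2[of "X k - ?A"] by (smt (verit))
  qed
  then have "(\<Sum>k<N. - (?\<delta> * (L * ?\<delta>)))
      \<le> (\<Sum>k<N. inner (X k - ?A) (loss_grad N (diag_mat s) X k - loss_grad N (diag_mat s) (\<lambda>_. ?A) k))"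
    by (intro sum_mono) auto
  then show ?thesis
    unfolding sum_inner_deviation_loss_grad[OF N]
    by (simp add: deviation_energy_nonneg algebra_simps)
qed

lemma deviation_energy_growth_bound:
  fixes s :: "'d::finite \<Rightarrow> real"
  assumes N: "1 \<le> N"
  obtains L where "\<And>X. (\<And>k. k < N \<Longrightarrow> norm (X k) \<le> R) \<Longrightarrow>
    - (\<Sum>k<N. inner (X k - diag_mean N X)
         (loss_grad N (diag_mat s) X k - diag_mean N (loss_grad N (diag_mat s) X)))
      \<le> L * deviation_energy N X"
proof -
  define R1 where "R1 = max 1 R"
  define L where "L = 3 * (norm (mat 1 :: real^'d^'d) * real (Suc N) * R1 ^ N + norm (diag_mat s)) ^ 3"
  have "- (\<Sum>k<N. inner (X k - diag_mean N X)
         (loss_grad N (diag_mat s) X k - diag_mean N (loss_grad N (diag_mat s) X)))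
      \<le> real N * L * deviation_energy N X"
    if X: "\<And>k. k < N \<Longrightarrow> norm (X k) \<le> R" for X
  proof (rule sum_inner_deviation_loss_grad_ge[OF N])
    have "norm (diag_mean N X) \<le> R"
      using N X by (rule norm_diag_mean_le)
    then show "norm (loss_grad N (diag_mat s) X k - loss_grad N (diag_mat s) (\<lambda>_. diag_mean N X) k)
        \<le> L * sqrt (deviation_energy N X)" if "k < N" for k
      unfolding L_def using X that norm_deviation_le_sqrt_deviation_energy
      by (intro loss_grad_lipschitz) (auto simp: R1_def intro: order_trans[OF _ max.cobounded2])
  qed
  then show thesis
    by (rule that)
qed

lemma bounded_Icc_of_has_vector_derivative:
  fixes N :: nat
  assumes "\<And>k t. k < N \<Longrightarrow> 0 \<le> t \<Longrightarrow> (V k has_vector_derivative V' k t) (at t within {0..})"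
  obtains R where "\<And>k t. k < N \<Longrightarrow> t \<in> {0..T} \<Longrightarrow> norm (V k t) \<le> R"
proof -
  have "continuous_on {0..T} (V k)" if "k < N" for k
  proof (rule continuous_on_vector_derivative)
    fix t assume "t \<in> {0..T}"
    with that show "(V k has_vector_derivative V' k t) (at t within {0..T})"
      by (intro has_vector_derivative_within_subset[OF assms]) auto
  qed
  then have "compact (\<Union>k<N. V k ` {0..T})"
    by (intro compact_UN compact_continuous_image) auto
  then obtain R where "\<forall>x \<in> (\<Union>k<N. V k ` {0..T}). norm x \<le> R"
    using compact_imp_bounded bounded_iff by blast
  then show thesis
    by (intro that[of R]) auto
qed

lemma balanced_flow_collapse:
  fixes V :: "nat \<Rightarrow> real \<Rightarrow> real^'d^'d"
  assumes N: "1 \<le> N" and flow: "grad_flow N (diag_mat s) V"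
    and init: "\<And>n. n < N \<Longrightarrow> V n 0 = diag_mat e"
    and T: "0 \<le> T" and n: "n < N"
  shows "V n T = diag_mean N (\<lambda>k. V k T)"
proof -
  define G where "G t = loss_grad N (diag_mat s) (\<lambda>k. V k t)" for t
  define E where "E t = deviation_energy N (\<lambda>k. V k t)" for t
  define P where "P t = (\<Sum>k<N. inner (V k t - diag_mean N (\<lambda>k. V k t)) (G t k - diag_mean N (G t)))" for t
  have V': "(V k has_vector_derivative - G t k) (at t within {0..})" if "0 \<le> t" "k < N" for t k
    using grad_flow_ode[OF flow that] by (simp add: G_def)
  obtain R where R: "\<And>k t. k < N \<Longrightarrow> t \<in> {0..T} \<Longrightarrow> norm (V k t) \<le> R"
    using bounded_Icc_of_has_vector_derivative[of N V, OF V'] by blast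
  obtain L where L: "\<And>X. (\<And>k. k < N \<Longrightarrow> norm (X k) \<le> R) \<Longrightarrow>
      - (\<Sum>k<N. inner (X k - diag_mean N X)
         (loss_grad N (diag_mat s) X k - diag_mean N (loss_grad N (diag_mat s) X)))
      \<le> L * deviation_energy N X"
    using deviation_energy_growth_bound[OF N] by blast
  have "- E 0 * exp (2 * L * T) \<le> - E T"
  proof (rule exp_lower_bound_of_deriv_ge[OF T])
    fix t assume t: "t \<in> {0..T}"
    have "(E has_real_derivative 2 * (\<Sum>k<N. inner (V k t - diag_mean N (\<lambda>k. V k t))
        (- G t k - diag_mean N (\<lambda>k. - G t k)))) (at t within {0..})"
      unfolding E_def by (intro has_real_derivative_deviation_energy V') (use t in auto)
    then have "(E has_real_derivative - (2 * P t)) (at t within {0..})"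
      by (rule DERIV_cong) (simp add: P_def inner_diff_right sum_subtractf)
    then show "((\<lambda>t. - E t) has_real_derivative 2 * P t) (at t within {0..T})"
      by (rule DERIV_subset[OF DERIV_cong[OF DERIV_minus]]) auto
    show "2 * L * - E t \<le> 2 * P t"
      using L[of "\<lambda>k. V k t"] R t by (simp add: E_def P_def G_def)
  qed
  moreover have "E 0 = 0"
    using diag_mean_const[OF N init] by (simp add: E_def deviation_energy_def init)
  ultimately have "E T = 0"
    using deviation_energy_nonneg[of N "\<lambda>k. V k T"] by (simp add: E_def)
  then show ?thesis
    using n by (simp add: E_def deviation_energy_eq_0_iff)
qed

lemma nonzero_of_deriv_eq_mult:
  fixes d g :: "real \<Rightarrow> real"
  assumes T: "0 \<le> T" and d0: "d 0 \<noteq> 0" and g: "continuous_on {0..T} g"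
    and d': "\<And>t. t \<in> {0..T} \<Longrightarrow> (d has_real_derivative - (g t * d t)) (at t within {0..T})"
  shows "d T \<noteq> 0"
proof -
  have "compact (g ` {0..T})"
    using g by (intro compact_continuous_image) auto
  then obtain K where "\<forall>x \<in> g ` {0..T}. norm x \<le> K"
    using compact_imp_bounded bounded_iff by blast
  then have K: "g t \<le> K" if "t \<in> {0..T}" for t
    using that abs_le_D1[of "g t" K] by auto
  have "d 0 * d 0 * exp (- 2 * K * T) \<le> d T * d T"
  proof (rule exp_lower_bound_of_deriv_ge[OF T])
    fix t assume t: "t \<in> {0..T}"
    show "((\<lambda>t. d t * d t) has_real_derivative - (g t * d t) * d t + - (g t * d t) * d t)
        (at t within {0..T})"
      by (rule DERIV_mult[OF d'[OF t] d'[OF t]])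
    have "(d t * d t) * g t \<le> (d t * d t) * K"
      using K[OF t] by (intro mult_left_mono) auto
    then show "- 2 * K * (d t * d t) \<le> - (g t * d t) * d t + - (g t * d t) * d t"
      by (simp add: algebra_simps)
  qed
  moreover have "0 < d 0 * d 0 * exp (- 2 * K * T)"
    using d0 by (auto simp: zero_less_mult_iff linorder_neq_iff)
  ultimately show ?thesis
    by auto
qed

lemma balanced_entry_flow_pos:
  fixes d :: "real \<Rightarrow> real"
  assumes N: "1 \<le> N" and s: "0 \<le> s" and d0: "0 < d 0"
    and d': "\<And>t. 0 \<le> t \<Longrightarrow>
      (d has_real_derivative - (d t ^ (N - 1) * (d t ^ N - s) / real N)) (at t within {0..})"
    and T: "0 \<le> T"
  shows "0 < d T"
proof -
  have d'_Icc: "(d has_real_derivative - (d t ^ (N - 1) * (d t ^ N - s) / real N)) (at t within {0..T'})"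
    if "t \<in> {0..T'}" for t T'
    using that by (intro DERIV_subset[OF d']) auto
  have cont: "continuous_on {0..T'} d" for T'
    using d'_Icc by (rule DERIV_continuous_on)
  \<comment> \<open>For N = 1 the equation reads d' = s - d, for which 0 is not an equilibrium; for N \<ge> 2 it
    has the form d' = - g d, whose solutions cannot reach 0.\<close>
  show ?thesis
  proof (cases "N = 1")
    case True
    have "d 0 * exp (- 1 * T) \<le> d T"
      using T d'_Icc s True by (intro exp_lower_bound_of_deriv_ge[of T d]) auto
    moreover have "0 < d 0 * exp (- 1 * T)"
      using d0 by simp
    ultimately show ?thesis
      by linarith
  next
    case False
    then have "N - 1 = Suc (N - 2)"
      using N by simp
    then have power_N_minus_1: "x ^ (N - 1) = x ^ (N - 2) * x" for x :: real
      by simp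
    define g where "g t = d t ^ (N - 2) * (d t ^ N - s) / real N" for t
    have nonzero: "d T' \<noteq> 0" if T': "0 \<le> T'" for T'
    proof (rule nonzero_of_deriv_eq_mult[OF T', of d g])
      show "continuous_on {0..T'} g"
        unfolding g_def using N by (intro continuous_intros cont) auto
      show "(d has_real_derivative - (g t * d t)) (at t within {0..T'})" if "t \<in> {0..T'}" for t
        by (rule DERIV_cong[OF d'_Icc[OF that]]) (unfold power_N_minus_1 g_def, simp add: algebra_simps)
    qed (use d0 in simp)
    show ?thesis
    proof (rule ccontr)
      assume "\<not> 0 < d T"
      then obtain t where "0 \<le> t" "d t = 0"
        using IVT2'[of d T 0 0] T d0 cont[of T] by fastforce
      then show False
        using nonzero by blast
    qed
  qed
qed

lemma balanced_power_rate:
  assumes N: "1 \<le> N" and x: "0 < x"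
  shows "real N * x ^ (N - 1) * - (x ^ (N - 1) * (x ^ N - s) / real N)
    = (x ^ N) powr (2 - 2 / real N) * (s - x ^ N)"
proof -
  have "(x ^ N) powr (2 - 2 / real N) = x powr (real N * (2 - 2 / real N))"
    using x by (simp add: powr_realpow[symmetric] powr_powr)
  also have "real N * (2 - 2 / real N) = real ((N - 1) + (N - 1))"
    using N by (simp add: field_simps of_nat_diff)
  also have "x powr real ((N - 1) + (N - 1)) = x ^ ((N - 1) + (N - 1))"
    by (rule powr_realpow[OF x])
  also have "\<dots> = x ^ (N - 1) * x ^ (N - 1)"
    by (rule power_add)
  finally have powr_eq: "(x ^ N) powr (2 - 2 / real N) = x ^ (N - 1) * x ^ (N - 1)" .
  show ?thesis
    unfolding powr_eq using N by (simp add: field_simps)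
qed

lemma balanced_flow_factors:
  fixes V :: "nat \<Rightarrow> real \<Rightarrow> real^'d^'d"
  assumes N: "1 \<le> N" and flow: "grad_flow N (diag_mat s) V"
    and init: "\<And>n. n < N \<Longrightarrow> V n 0 = diag_mat e"
    and t: "0 \<le> t" and k: "k < N"
  shows "V k t = diag_mat (\<lambda>i. V 0 t $ i $ i)"
proof -
  obtain m where m: "diag_mean N (\<lambda>k. V k t) = diag_mat m"
    using diag_mean_eq_diag_mat by blast
  have "V k t = diag_mat m" "V 0 t = diag_mat m"
    using balanced_flow_collapse[OF N flow init t, of k] balanced_flow_collapse[OF N flow init t, of 0]
      k N m by simp_all
  then show ?thesis
    by (simp add: vec_eq_iff)
qed

lemma balanced_flow_entry_deriv:
  fixes V :: "nat \<Rightarrow> real \<Rightarrow> real^'d^'d"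
  assumes N: "1 \<le> N" and flow: "grad_flow N (diag_mat s) V"
    and init: "\<And>n. n < N \<Longrightarrow> V n 0 = diag_mat e" and t: "0 \<le> t"
  shows "((\<lambda>r. V 0 r $ i $ i) has_real_derivative
      - ((V 0 t $ i $ i) ^ (N - 1) * ((V 0 t $ i $ i) ^ N - s i) / real N)) (at t within {0..})"
proof -
  let ?d = "\<lambda>i. V 0 t $ i $ i"
  have "loss_grad N (diag_mat s) (\<lambda>k. V k t) 0 = loss_grad N (diag_mat s) (\<lambda>_. diag_mat ?d) 0"
    using N by (intro loss_grad_cong balanced_flow_factors[OF N flow init t]) auto
  also have "\<dots> = diag_mat (\<lambda>i. ?d i ^ (N - 1) * (?d i ^ N - s i) / real N)"
    using N by (intro loss_grad_const_diag_mat) auto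
  finally have "(V 0 has_vector_derivative - diag_mat (\<lambda>i. ?d i ^ (N - 1) * (?d i ^ N - s i) / real N))
      (at t within {0..})"
    using grad_flow_ode[OF flow t, of 0] N by simp
  from bounded_linear.has_vector_derivative[OF
      bounded_linear_compose[OF bounded_linear_vec_nth bounded_linear_vec_nth] this, of i i]
  show ?thesis
    unfolding has_real_derivative_iff_has_vector_derivative by simp
qed

lemma balanced_flow_singular_values:
  fixes V :: "nat \<Rightarrow> real \<Rightarrow> real^'d^'d"
  assumes N: "1 \<le> N" and s: "\<And>i. 0 \<le> s i" and c: "0 < c"
    and init: "\<And>n. n < N \<Longrightarrow> V n 0 = c *\<^sub>R mat 1"
    and flow: "grad_flow N (diag_mat s) V" and t: "0 \<le> t"
  shows "prodmat N (\<lambda>k. V k t) = diag_mat (\<lambda>i. (V 0 t $ i $ i) ^ N)"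
    and "0 < V 0 t $ i $ i"
    and "((\<lambda>r. prodmat N (\<lambda>k. V k r) $ i $ i) has_real_derivative
          (prodmat N (\<lambda>k. V k t) $ i $ i) powr (2 - 2 / real N) * (s i - prodmat N (\<lambda>k. V k t) $ i $ i))
          (at t within {0..})"
proof -
  define d where "d i r = V 0 r $ i $ i" for i r
  have init': "V n 0 = diag_mat (\<lambda>_. c)" if "n < N" for n
    using init[OF that] by (simp add: mat_eq_diag_mat)
  have d': "(d i has_real_derivative - (d i r ^ (N - 1) * (d i r ^ N - s i) / real N)) (at r within {0..})"
    if "0 \<le> r" for i r
    unfolding d_def by (rule balanced_flow_entry_deriv[OF N flow init' that])
  have prod: "prodmat N (\<lambda>k. V k r) = diag_mat (\<lambda>i. d i r ^ N)" if "0 \<le> r" for r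
  proof -
    have "prodmat N (\<lambda>k. V k r) = prodmat N (\<lambda>_. diag_mat (\<lambda>i. d i r))"
      unfolding d_def by (intro prodmat_cong balanced_flow_factors[OF N flow init' that])
    then show ?thesis
      by (simp add: prodmat_const_diag_mat)
  qed
  have pos: "0 < d i r" if "0 \<le> r" for i r
  proof (rule balanced_entry_flow_pos[OF N s _ d' that])
    show "0 < d i 0"
      using init[of 0] N c by (simp add: d_def mat_def)
  qed
  show "prodmat N (\<lambda>k. V k t) = diag_mat (\<lambda>i. (V 0 t $ i $ i) ^ N)"
    using prod[OF t] by (simp add: d_def)
  show "0 < V 0 t $ i $ i"
    using pos[OF t] by (simp add: d_def)
  have "((\<lambda>r. d i r ^ N) has_real_derivative
      real N * d i t ^ (N - 1) * - (d i t ^ (N - 1) * (d i t ^ N - s i) / real N)) (at t within {0..})"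
    by (rule DERIV_cong[OF DERIV_power[OF d'[OF t, of i], of N]]) simp
  then have deriv_power: "((\<lambda>r. d i r ^ N) has_real_derivative
      (d i t ^ N) powr (2 - 2 / real N) * (s i - d i t ^ N)) (at t within {0..})"
    unfolding balanced_power_rate[OF N pos[OF t]] .
  have entry: "prodmat N (\<lambda>k. V k t) $ i $ i = d i t ^ N"
    using prod[OF t] by simp
  show "((\<lambda>r. prodmat N (\<lambda>k. V k r) $ i $ i) has_real_derivative
      (prodmat N (\<lambda>k. V k t) $ i $ i) powr (2 - 2 / real N) * (s i - prodmat N (\<lambda>k. V k t) $ i $ i))
      (at t within {0..})"
    unfolding entry
    by (rule has_field_derivative_transform_within[OF deriv_power, where d = 1]) (use t prod in auto)
qed

theorem theorem4:
  fixes N :: nat and \<sigma>0 :: real and Wst U :: "real^'d^'d"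
    and Ws :: "nat \<Rightarrow> real \<Rightarrow> real^'d^'d"
  assumes N: "N \<ge> 1"
    and s0: "\<sigma>0 > 0"
    and sym: "transpose Wst = Wst"
    and psd: "\<forall>x. x \<bullet> (Wst *v x) \<ge> 0"
    and init: "\<forall>n<N. Ws n 0 = root N \<sigma>0 *\<^sub>R mat 1"
    and flow: "grad_flow N Wst Ws"
    and orth: "orthogonal_matrix U"
    and diag: "\<forall>i j. i \<noteq> j \<longrightarrow> (transpose U ** Wst ** U) $ i $ j = 0"
  shows "\<forall>t\<ge>0.
     (\<forall>i j. i \<noteq> j \<longrightarrow> (transpose U ** prodmat N (\<lambda>k. Ws k t) ** U) $ i $ j = 0) \<and>
     (\<forall>i. (transpose U ** prodmat N (\<lambda>k. Ws k t) ** U) $ i $ i \<ge> 0 \<and>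
        ((\<lambda>s. (transpose U ** prodmat N (\<lambda>k. Ws k s) ** U) $ i $ i) has_real_derivative
          ((transpose U ** prodmat N (\<lambda>k. Ws k t) ** U) $ i $ i) powr (2 - 2 / real N) *
          ((transpose U ** Wst ** U) $ i $ i - (transpose U ** prodmat N (\<lambda>k. Ws k t) ** U) $ i $ i))
          (at t within {0..}))"
proof -
  define s where "s i = (transpose U ** Wst ** U) $ i $ i" for i
  have S: "transpose U ** Wst ** U = diag_mat s"
    using diag by (simp add: vec_eq_iff s_def)
  have s: "0 \<le> s i" for i
    using psd by (simp add: s_def congruence_diag_entry)
  have c: "0 < root N \<sigma>0"
    using N s0 by simp
  have init': "transpose U ** Ws n 0 ** U = root N \<sigma>0 *\<^sub>R mat 1" if "n < N" for n
    using init that orth by (simp add: orthogonal_matrix matrix_scalar_ac flip: scalar_matrix_assoc)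
  have flow': "grad_flow N (diag_mat s) (\<lambda>n t. transpose U ** Ws n t ** U)"
    using grad_flow_orthogonal_similar[OF orth flow] by (simp add: S)
  note balanced = balanced_flow_singular_values[OF N s c init' flow']
  show ?thesis
    unfolding prodmat_orthogonal_similar[OF orth] S
    using balanced(1) balanced(2)[THEN less_imp_le, THEN zero_le_power] balanced(3)
    by simp
qed

end
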